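(* For all integers $p,q\ge 2$, $\chi_s(K_p^+\,\square\,K_q^-)=\left\lceil \frac{pq}{2}\right\rceil$.
   Context: A signed graph $(G,\sigma)$ is a simple loopless undirected graph with a signature $\sigma:E(G)\to\{+1,-1\}$. Switching a vertex negates the signs of its incident edges; two signatures are equivalent if one is obtained from the other by switching a set of vertices. A homomorphism of $(G,\sigma)$ to $(H,\pi)$ is a graph homomorphism $\varphi:G\to H$ for which there is a signature $\sigma'$ equivalent to $\sigma$ with $\pi(\varphi(u)\varphi(v))=\sigma'(uv)$ for every edge $uv$; $\chi_s(G,\sigma)$ is the smallest order of a signed graph to which $(G,\sigma)$ admits a homomorphism. $K_p^+$ (resp. $K_q^-$) is the complete graph on $p$ (resp. $q$) vertices with all edges positive (resp. negative). The Cartesian product $(G,\sigma)\,\square\,(H,\pi)$ is the signed graph on $G\,\square\,H$ where $(u,v_1)(u,v_2)$ has sign $\pi(v_1v_2)$ and $(u_1,v)(u_2,v)$ has sign $\sigma(u_1u_2)$. *)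

theory Defs
  imports Complex_Main
begin

record 'a sgraph =
  verts :: "'a set"
  arcs  :: "('a \<times> 'a) set"
  sgn   :: "'a \<Rightarrow> 'a \<Rightarrow> int"

definition signed_graph :: "('a, 'b) sgraph_scheme \<Rightarrow> bool" where
  "signed_graph G \<longleftrightarrow>
     finite (verts G) \<and> arcs G \<subseteq> verts G \<times> verts G \<and>
     (\<forall>u v. (u, v) \<in> arcs G \<longrightarrow> (v, u) \<in> arcs G) \<and>
     (\<forall>u. (u, u) \<notin> arcs G) \<and>
     (\<forall>u v. (u, v) \<in> arcs G \<longrightarrow> sgn G u v \<in> {1, -1} \<and> sgn G u v = sgn G v u)"

definition switch :: "'a set \<Rightarrow> ('a \<Rightarrow> 'a \<Rightarrow> int) \<Rightarrow> 'a \<Rightarrow> 'a \<Rightarrow> int" where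
  "switch X \<sigma> u v = (if (u \<in> X) \<noteq> (v \<in> X) then - \<sigma> u v else \<sigma> u v)"

definition sg_hom :: "'a sgraph \<Rightarrow> 'b sgraph \<Rightarrow> ('a \<Rightarrow> 'b) \<Rightarrow> bool" where
  "sg_hom G H \<phi> \<longleftrightarrow>
     \<phi> ` verts G \<subseteq> verts H \<and>
     (\<forall>u v. (u, v) \<in> arcs G \<longrightarrow> (\<phi> u, \<phi> v) \<in> arcs H) \<and>
     (\<exists>X \<subseteq> verts G. \<forall>u v. (u, v) \<in> arcs G \<longrightarrow>
         sgn H (\<phi> u) (\<phi> v) = switch X (sgn G) u v)"

text \<open>Signed chromatic number: least order of a signed graph admitting a homomorphism
  from G (target graphs are taken with vertices in nat, which loses no generality
  for finite graphs).\<close>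
definition chi_s :: "'a sgraph \<Rightarrow> nat" where
  "chi_s G = (LEAST n. \<exists>(H :: nat sgraph) \<phi>.
       signed_graph H \<and> card (verts H) = n \<and> sg_hom G H \<phi>)"

definition Kcomp :: "nat \<Rightarrow> int \<Rightarrow> nat sgraph" where
  "Kcomp p s = \<lparr> verts = {0..<p}, arcs = {(i, j). i < p \<and> j < p \<and> i \<noteq> j},
                 sgn = (\<lambda>_ _. s) \<rparr>"

definition cprod :: "'a sgraph \<Rightarrow> 'b sgraph \<Rightarrow> ('a \<times> 'b) sgraph" where
  "cprod G H = \<lparr> verts = verts G \<times> verts H,
     arcs = {((u1, v1), (u2, v2)).
               (u1 = u2 \<and> u1 \<in> verts G \<and> (v1, v2) \<in> arcs H) \<or>
               (v1 = v2 \<and> v1 \<in> verts H \<and> (u1, u2) \<in> arcs G)},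
     sgn = (\<lambda>(u1, v1) (u2, v2). if u1 = u2 then sgn H v1 v2 else sgn G u1 u2) \<rparr>"

end

theory Submission
  imports Defs
begin

(* A homomorphism of a signed graph G is, up to renaming the target, a colouring f of the
   vertices together with a switching set X such that adjacent vertices get distinct colours
   and the switched sign of an edge depends only on the colours of its ends; so chi_s G is the
   least number of colours of such a colouring.

   In K_p^+ \<box> K_q^- two vertices (a,b), (c,d) of the same colour are non-adjacent, so a \<noteq> c and
   b \<noteq> d. Their edges to the common neighbour (a,d) carry the same pair of colours but opposite
   signs, so exactly one of the two vertices is switched. Hence a colour class has at most two
   vertices, and at least \<lceil>pq/2\<rceil> colours are needed.

   Conversely, colouring (i,0) and (i-1,1) of a p \<times> 2 grid with colour i and switching the
   second column makes every edge positive, so p colours suffice there, and a 3 \<times> 3 grid has a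
   colouring with 5 colours. Colourings of grids with the same number of rows can be placed
   side by side with disjoint palettes, because along a row the switches of two vertices of the
   same colour flip together; transposing a grid merely negates all signs. Assembling these
   blocks yields \<lceil>pq/2\<rceil> colours. *)

definition sign_colouring :: "'a sgraph \<Rightarrow> 'a set \<Rightarrow> ('a \<Rightarrow> 'c) \<Rightarrow> bool" where
  "sign_colouring G X f \<longleftrightarrow>
     (\<forall>u v. (u, v) \<in> arcs G \<longrightarrow> f u \<noteq> f v) \<and>
     (\<forall>u v u' v'. (u, v) \<in> arcs G \<longrightarrow> (u', v') \<in> arcs G \<longrightarrow> f u = f u' \<longrightarrow> f v = f v' \<longrightarrow>
        switch X (sgn G) u v = switch X (sgn G) u' v')"

lemma sign_colouringI:
  assumes "\<And>u v. (u, v) \<in> arcs G \<Longrightarrow> f u \<noteq> f v"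
    and "\<And>u v. (u, v) \<in> arcs G \<Longrightarrow> switch X (sgn G) u v = F (f u) (f v)"
  shows "sign_colouring G X f"
  using assms unfolding sign_colouring_def by metis

lemma sign_colouringD:
  assumes "sign_colouring G X f"
  shows "(u, v) \<in> arcs G \<Longrightarrow> f u \<noteq> f v"
    and "(u, v) \<in> arcs G \<Longrightarrow> (u', v') \<in> arcs G \<Longrightarrow> f u = f u' \<Longrightarrow> f v = f v' \<Longrightarrow>
      switch X (sgn G) u v = switch X (sgn G) u' v'"
  using assms unfolding sign_colouring_def by blast+

lemma sign_colouring_factor:
  assumes "sign_colouring G X f"
  obtains F where "\<And>u v. (u, v) \<in> arcs G \<Longrightarrow> switch X (sgn G) u v = F (f u) (f v)"
proof -
  define F where "F x y =
    (SOME s. \<exists>u v. (u, v) \<in> arcs G \<and> f u = x \<and> f v = y \<and> s = switch X (sgn G) u v)" for x y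
  have "switch X (sgn G) u v = F (f u) (f v)" if "(u, v) \<in> arcs G" for u v
  proof -
    have "\<exists>s u' v'. (u', v') \<in> arcs G \<and> f u' = f u \<and> f v' = f v \<and> s = switch X (sgn G) u' v'"
      using that by blast
    from someI_ex[OF this] obtain u' v' where "(u', v') \<in> arcs G" "f u' = f u" "f v' = f v"
        "F (f u) (f v) = switch X (sgn G) u' v'"
      unfolding F_def by blast
    with that show ?thesis
      using sign_colouringD(2)[OF assms] by metis
  qed
  then show thesis
    by (rule that)
qed

lemma switch_restrict: "u \<in> V \<Longrightarrow> v \<in> V \<Longrightarrow> switch (X \<inter> V) \<sigma> u v = switch X \<sigma> u v"
  by (simp add: switch_def)

lemma sign_colouring_imp_sg_hom:
  fixes f :: "'a \<Rightarrow> 'b"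
  assumes G: "signed_graph G" and f: "sign_colouring G X f"
  shows "\<exists>H :: 'b sgraph. signed_graph H \<and> verts H = f ` verts G \<and> sg_hom G H f"
proof -
  obtain F where F: "\<And>u v. (u, v) \<in> arcs G \<Longrightarrow> switch X (sgn G) u v = F (f u) (f v)"
    using sign_colouring_factor[OF f] by blast
  define H :: "'b sgraph" where
    "H = \<lparr>verts = f ` verts G, arcs = map_prod f f ` arcs G, sgn = F\<rparr>"
  have sym: "(v, u) \<in> arcs G" and sgn_sym: "sgn G u v = sgn G v u"
    and sgn_pm: "sgn G u v \<in> {1, -1}" if "(u, v) \<in> arcs G" for u v
    using G that unfolding signed_graph_def by blast+
  have sign: "sgn H (f u) (f v) \<in> {1, -1} \<and> sgn H (f u) (f v) = sgn H (f v) (f u)"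
    if uv: "(u, v) \<in> arcs G" for u v
  proof -
    have "sgn H (f u) (f v) = switch X (sgn G) u v" "sgn H (f v) (f u) = switch X (sgn G) v u"
      using F[OF uv] F[OF sym[OF uv]] by (simp_all add: H_def)
    then show ?thesis
      using sgn_pm[OF uv] sgn_sym[OF uv] by (auto simp: switch_def)
  qed
  have arcs_G: "arcs G \<subseteq> verts G \<times> verts G"
    using G unfolding signed_graph_def by blast
  have "signed_graph H"
    unfolding signed_graph_def
  proof (intro conjI allI impI)
    show "finite (verts H)"
      using G by (simp add: H_def signed_graph_def)
    show "arcs H \<subseteq> verts H \<times> verts H"
      using arcs_G by (auto simp: H_def)
    show "(x, x) \<notin> arcs H" for x
      using f unfolding sign_colouring_def H_def by auto
  next
    fix x y
    assume "(x, y) \<in> arcs H"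
    then obtain u v where "(u, v) \<in> arcs G" "x = f u" "y = f v"
      by (auto simp: H_def)
    then show "(y, x) \<in> arcs H" "sgn H x y \<in> {1, -1}" "sgn H x y = sgn H y x"
      using sign sym by (auto simp: H_def)
  qed
  moreover have "sg_hom G H f"
    unfolding sg_hom_def
  proof (intro conjI allI impI exI[of _ "X \<inter> verts G"])
    fix u v
    assume uv: "(u, v) \<in> arcs G"
    then have "u \<in> verts G" "v \<in> verts G"
      using arcs_G by auto
    then show "sgn H (f u) (f v) = switch (X \<inter> verts G) (sgn G) u v"
      using F[OF uv] by (simp add: H_def switch_restrict)
  qed (auto simp: H_def)
  ultimately show ?thesis
    by (auto simp: H_def)
qed

lemma sg_hom_imp_sign_colouring:
  assumes H: "signed_graph H" and \<phi>: "sg_hom G H \<phi>"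
  obtains X where "sign_colouring G X \<phi>"
proof -
  obtain X where X: "\<And>u v. (u, v) \<in> arcs G \<Longrightarrow> sgn H (\<phi> u) (\<phi> v) = switch X (sgn G) u v"
    using \<phi> unfolding sg_hom_def by blast
  have "sign_colouring G X \<phi>"
  proof (rule sign_colouringI)
    show "\<phi> u \<noteq> \<phi> v" if "(u, v) \<in> arcs G" for u v
      using \<phi> H that unfolding sg_hom_def signed_graph_def by metis
    show "switch X (sgn G) u v = sgn H (\<phi> u) (\<phi> v)" if "(u, v) \<in> arcs G" for u v
      using X[OF that] by simp
  qed
  then show thesis
    by (rule that)
qed

lemma chi_s_le:
  fixes H :: "nat sgraph"
  assumes "signed_graph H" and "sg_hom G H \<phi>"
  shows "chi_s G \<le> card (verts H)"
  unfolding chi_s_def by (rule Least_le) (use assms in blast)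

lemma chi_s_attained:
  fixes H :: "nat sgraph"
  assumes "signed_graph H" and "sg_hom G H \<phi>"
  obtains H' :: "nat sgraph" and \<psi> where
    "signed_graph H'" "card (verts H') = chi_s G" "sg_hom G H' \<psi>"
proof -
  let ?P = "\<lambda>n. \<exists>(H :: nat sgraph) \<phi>. signed_graph H \<and> card (verts H) = n \<and> sg_hom G H \<phi>"
  have "?P (card (verts H))"
    using assms by blast
  then have "?P (chi_s G)"
    unfolding chi_s_def by (rule LeastI)
  then show thesis
    using that by blast
qed

lemma chi_s_eqI:
  fixes G :: "'a sgraph" and f :: "'a \<Rightarrow> nat"
  assumes G: "signed_graph G" and f: "sign_colouring G X f" "card (f ` verts G) \<le> n"
    and lower: "\<And>X (g :: 'a \<Rightarrow> nat). sign_colouring G X g \<Longrightarrow> n \<le> card (g ` verts G)"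
  shows "chi_s G = n"
proof (rule antisym)
  obtain H :: "nat sgraph" where H: "signed_graph H" "verts H = f ` verts G" "sg_hom G H f"
    using sign_colouring_imp_sg_hom[OF G f(1)] by blast
  then show "chi_s G \<le> n"
    using chi_s_le[OF H(1,3)] f(2) by simp
  obtain H' :: "nat sgraph" and \<psi> where
    H': "signed_graph H'" "card (verts H') = chi_s G" "sg_hom G H' \<psi>"
    using chi_s_attained[OF H(1,3)] by blast
  obtain X' where "sign_colouring G X' \<psi>"
    using sg_hom_imp_sign_colouring[OF H'(1,3)] by blast
  then have "n \<le> card (\<psi> ` verts G)"
    by (rule lower)
  also have "\<dots> \<le> card (verts H')"
  proof (rule card_mono)
    show "finite (verts H')"
      using H'(1) unfolding signed_graph_def by blast
    show "\<psi> ` verts G \<subseteq> verts H'"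
      using H'(3) unfolding sg_hom_def by blast
  qed
  finally show "n \<le> chi_s G"
    using H'(2) by simp
qed

lemma signed_graph_Kcomp: "s \<in> {1, -1} \<Longrightarrow> signed_graph (Kcomp p s)"
  by (auto simp: signed_graph_def Kcomp_def)

lemma signed_graph_cprod:
  assumes "signed_graph G" and "signed_graph H"
  shows "signed_graph (cprod G H)"
  using assms unfolding signed_graph_def
  by (intro conjI; simp add: cprod_def; blast)

abbreviation signed_rook :: "nat \<Rightarrow> nat \<Rightarrow> (nat \<times> nat) sgraph" where
  "signed_rook p q \<equiv> cprod (Kcomp p 1) (Kcomp q (-1))"

lemma verts_signed_rook: "verts (signed_rook p q) = {0..<p} \<times> {0..<q}"
  by (simp add: cprod_def Kcomp_def)

lemma arcs_signed_rook:
  "((a, b), (c, d)) \<in> arcs (signed_rook p q) \<longleftrightarrow>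
     a < p \<and> b < q \<and> c < p \<and> d < q \<and> (a = c) \<noteq> (b = d)"
  by (auto simp: cprod_def Kcomp_def)

lemma switch_signed_rook:
  "switch X (sgn (signed_rook p q)) (a, b) (c, d) =
     (if ((a, b) \<in> X) = ((c, d) \<in> X) then 1 else -1) * (if a = c then -1 else 1)"
  by (simp add: switch_def cprod_def Kcomp_def)

lemma switch_signed_rook_commute:
  "switch X (sgn (signed_rook p q)) u v = switch X (sgn (signed_rook p q)) v u"
  by (cases u; cases v) (simp add: switch_signed_rook eq_commute)

lemma signed_graph_signed_rook: "signed_graph (signed_rook p q)"
  by (intro signed_graph_cprod signed_graph_Kcomp) simp_all

lemma signed_rook_fibre:
  assumes f: "sign_colouring (signed_rook p q) X f"
    and "a < p" "b < q" "c < p" "d < q" "(a, b) \<noteq> (c, d)" "f (a, b) = f (c, d)"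
  shows "a \<noteq> c" "b \<noteq> d" "(a, b) \<in> X \<longleftrightarrow> (c, d) \<notin> X"
proof -
  show "a \<noteq> c" "b \<noteq> d"
    using sign_colouringD(1)[OF f, of "(a, b)" "(c, d)"] assms(2-) by (auto simp: arcs_signed_rook)
  then have "((a, b), (a, d)) \<in> arcs (signed_rook p q)" "((c, d), (a, d)) \<in> arcs (signed_rook p q)"
    using assms(2-5) by (auto simp: arcs_signed_rook)
  then have "switch X (sgn (signed_rook p q)) (a, b) (a, d) =
      switch X (sgn (signed_rook p q)) (c, d) (a, d)"
    using sign_colouringD(2)[OF f] assms(7) by blast
  with \<open>a \<noteq> c\<close> show "(a, b) \<in> X \<longleftrightarrow> (c, d) \<notin> X"
    by (auto simp: switch_signed_rook split: if_splits)
qed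

lemma signed_rook_card_colours:
  assumes f: "sign_colouring (signed_rook p q) X f"
  shows "p * q \<le> 2 * card (f ` verts (signed_rook p q))"
proof -
  let ?V = "verts (signed_rook p q)"
  have fibre: "card {u \<in> ?V. f u = x} \<le> 2" for x
  proof -
    have "inj_on (\<lambda>u. u \<in> X) {u \<in> ?V. f u = x}"
      using signed_rook_fibre(3)[OF f] by (auto simp: inj_on_def verts_signed_rook)
    then have "card {u \<in> ?V. f u = x} \<le> card (UNIV :: bool set)"
      by (rule card_inj_on_le) auto
    then show ?thesis
      by simp
  qed
  have "card ?V = (\<Sum>x\<in>f ` ?V. card {u \<in> ?V. f u = x})"
    using sum.image_gen[of ?V "\<lambda>_. 1 :: nat" f] by (simp add: verts_signed_rook)
  also have "\<dots> \<le> (\<Sum>x\<in>f ` ?V. 2)"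
    by (rule sum_mono) (rule fibre)
  finally show ?thesis
    by (simp add: verts_signed_rook mult.commute)
qed

definition rook_colourable :: "nat \<Rightarrow> nat \<Rightarrow> nat \<Rightarrow> bool" where
  "rook_colourable p q N \<longleftrightarrow>
     (\<exists>X f. sign_colouring (signed_rook p q) X f \<and> f ` verts (signed_rook p q) \<subseteq> {0..<N})"

lemma rook_colourable_no_columns: "rook_colourable p 0 0"
  unfolding rook_colourable_def sign_colouring_def
  by (auto simp: verts_signed_rook arcs_signed_rook)

lemma rook_colourable_two_columns:
  assumes "2 \<le> p"
  shows "rook_colourable p 2 p"
proof -
  define f :: "nat \<times> nat \<Rightarrow> nat" where "f = (\<lambda>(i, j). if j = 0 then i else Suc i mod p)"
  have "sign_colouring (signed_rook p 2) {(i, j). j = 1} f"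
  proof (rule sign_colouringI)
    fix u v
    assume "(u, v) \<in> arcs (signed_rook p 2)"
    with assms show "f u \<noteq> f v"
      by (cases u; cases v) (auto simp: f_def arcs_signed_rook mod_Suc split: if_splits)
    show "switch {(i, j). j = 1} (sgn (signed_rook p 2)) u v = (\<lambda>_ _. 1) (f u) (f v)"
      using \<open>(u, v) \<in> arcs _\<close> by (cases u; cases v) (auto simp: arcs_signed_rook switch_signed_rook)
  qed
  moreover have "f ` verts (signed_rook p 2) \<subseteq> {0..<p}"
    using assms by (auto simp: f_def verts_signed_rook)
  ultimately show ?thesis
    unfolding rook_colourable_def by blast
qed

lemma rook_colourable_3_3: "rook_colourable 3 3 5"
proof -
  \<comment> \<open>F is the signature of the target, a signed K5.\<close>
  define f :: "nat \<times> nat \<Rightarrow> nat" where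
    "f = (\<lambda>(i, j). [[4, 0, 1], [2, 3, 0], [3, 1, 2]] ! i ! j)"
  define X :: "(nat \<times> nat) set" where "X = {(1, 2), (2, 0), (2, 1), (2, 2)}"
  define F :: "nat \<Rightarrow> nat \<Rightarrow> int" where
    "F x y = [[0, -1, 1, 1, -1], [-1, 0, -1, -1, -1], [1, -1, 0, -1, 1],
              [1, -1, -1, 0, -1], [-1, -1, 1, -1, 0]] ! x ! y" for x y
  have "\<forall>a<3. \<forall>b<3. \<forall>c<3. \<forall>d<3. (a = c) \<noteq> (b = d) \<longrightarrow>
      f (a, b) \<noteq> f (c, d) \<and>
      switch X (sgn (signed_rook 3 3)) (a, b) (c, d) = F (f (a, b)) (f (c, d))"
    by (simp add: f_def X_def F_def switch_signed_rook numeral_eq_Suc All_less_Suc2 split del: if_split)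
  then have "sign_colouring (signed_rook 3 3) X f"
    by (intro sign_colouringI[where F = F]) (auto simp: arcs_signed_rook)
  moreover have "f ` verts (signed_rook 3 3) \<subseteq> {0..<5}"
    by (auto simp: f_def verts_signed_rook less_Suc_eq numeral_eq_Suc)
  ultimately show ?thesis
    unfolding rook_colourable_def by blast
qed

lemma rook_colourable_transpose:
  assumes "rook_colourable p q N"
  shows "rook_colourable q p N"
proof -
  obtain X f where f: "sign_colouring (signed_rook p q) X f"
    and range: "f ` verts (signed_rook p q) \<subseteq> {0..<N}"
    using assms unfolding rook_colourable_def by blast
  have arcs: "(u, v) \<in> arcs (signed_rook q p) \<longleftrightarrow>
      (prod.swap u, prod.swap v) \<in> arcs (signed_rook p q)" for u v
    by (cases u; cases v) (auto simp: arcs_signed_rook)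
  have switch: "switch (prod.swap ` X) (sgn (signed_rook q p)) u v =
      - switch X (sgn (signed_rook p q)) (prod.swap u) (prod.swap v)"
    if "(u, v) \<in> arcs (signed_rook q p)" for u v
    using that by (cases u; cases v) (auto simp: arcs_signed_rook switch_signed_rook)
  have "sign_colouring (signed_rook q p) (prod.swap ` X) (f \<circ> prod.swap)"
    unfolding sign_colouring_def
  proof (intro conjI allI impI)
    fix u v
    assume "(u, v) \<in> arcs (signed_rook q p)"
    then show "(f \<circ> prod.swap) u \<noteq> (f \<circ> prod.swap) v"
      using sign_colouringD(1)[OF f] arcs by simp
  next
    fix u v u' v'
    assume uv: "(u, v) \<in> arcs (signed_rook q p)" and u'v': "(u', v') \<in> arcs (signed_rook q p)"
      and "(f \<circ> prod.swap) u = (f \<circ> prod.swap) u'" "(f \<circ> prod.swap) v = (f \<circ> prod.swap) v'"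
    then have "switch X (sgn (signed_rook p q)) (prod.swap u) (prod.swap v) =
        switch X (sgn (signed_rook p q)) (prod.swap u') (prod.swap v')"
      by (intro sign_colouringD(2)[OF f]) (simp_all only: arcs comp_apply)
    then show "switch (prod.swap ` X) (sgn (signed_rook q p)) u v =
        switch (prod.swap ` X) (sgn (signed_rook q p)) u' v'"
      using switch[OF uv] switch[OF u'v'] by simp
  qed
  moreover have "(f \<circ> prod.swap) ` verts (signed_rook q p) \<subseteq> {0..<N}"
    using range by (auto simp: verts_signed_rook)
  ultimately show ?thesis
    unfolding rook_colourable_def by blast
qed

lemma signed_rook_cross_edges:
  assumes f1: "sign_colouring (signed_rook p q1) X1 f1"
    and f2: "sign_colouring (signed_rook p q2) X2 f2"
    and "a < p" "a' < p" "b < q1" "b' < q1" "d < q2" "d' < q2"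
    and "f1 (a, b) = f1 (a', b')" "f2 (a, d) = f2 (a', d')"
  shows "(((a, b) \<in> X1) = ((a, d) \<in> X2)) = (((a', b') \<in> X1) = ((a', d') \<in> X2))"
proof (cases "a = a'")
  case True
  have "(a, b) = (a', b')"
  proof (rule ccontr)
    assume "(a, b) \<noteq> (a', b')"
    from signed_rook_fibre(1)[OF f1 assms(3,5,4,6) this assms(9)] True show False ..
  qed
  moreover have "(a, d) = (a', d')"
  proof (rule ccontr)
    assume "(a, d) \<noteq> (a', d')"
    from signed_rook_fibre(1)[OF f2 assms(3,7,4,8) this assms(10)] True show False ..
  qed
  ultimately show ?thesis
    by simp
next
  case False
  then have "(a, b) \<noteq> (a', b')" "(a, d) \<noteq> (a', d')"
    by simp_all
  from signed_rook_fibre(3)[OF f1 assms(3,5,4,6) this(1) assms(9)]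
    signed_rook_fibre(3)[OF f2 assms(3,7,4,8) this(2) assms(10)]
  show ?thesis
    by blast
qed

context
  fixes p q1 q2 N1 :: nat and X1 X2 X :: "(nat \<times> nat) set" and f1 f2 f :: "nat \<times> nat \<Rightarrow> nat"
  assumes f1: "sign_colouring (signed_rook p q1) X1 f1"
    and f2: "sign_colouring (signed_rook p q2) X2 f2"
    and range1: "f1 ` verts (signed_rook p q1) \<subseteq> {0..<N1}"
    and f_def: "f = (\<lambda>(i, j). if j < q1 then f1 (i, j) else N1 + f2 (i, j - q1))"
    and X_def: "X = {(i, j). if j < q1 then (i, j) \<in> X1 else (i, j - q1) \<in> X2}"
begin

lemma join_side: "i < p \<Longrightarrow> f (i, j) < N1 \<longleftrightarrow> j < q1"
  using range1 by (auto simp: f_def verts_signed_rook image_subset_iff)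

lemma join_proper:
  assumes uv: "(u, v) \<in> arcs (signed_rook p (q1 + q2))"
  shows "f u \<noteq> f v"
proof -
  obtain a b c d where pts: "u = (a, b)" "v = (c, d)"
    by (metis surj_pair)
  consider "b < q1" "d < q1" | "\<not> b < q1" "\<not> d < q1" | "(b < q1) \<noteq> (d < q1)"
    by blast
  then show ?thesis
  proof cases
    case 1
    then have "f1 (a, b) \<noteq> f1 (c, d)"
      using sign_colouringD(1)[OF f1] uv pts by (simp add: arcs_signed_rook)
    with 1 show ?thesis
      using pts by (simp add: f_def)
  next
    case 2
    then have "((a, b - q1), (c, d - q1)) \<in> arcs (signed_rook p q2)"
      using uv pts by (auto simp: arcs_signed_rook)
    with 2 show ?thesis
      using sign_colouringD(1)[OF f2] pts by (simp add: f_def)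
  next
    case 3
    then show ?thesis
      using join_side uv pts by (metis arcs_signed_rook)
  qed
qed

lemma join_switch_left:
  assumes "((a, b), (c, d)) \<in> arcs (signed_rook p (q1 + q2))"
    and "((a', b'), (c', d')) \<in> arcs (signed_rook p (q1 + q2))"
    and "b < q1" "d < q1" "b' < q1" "d' < q1" "f (a, b) = f (a', b')" "f (c, d) = f (c', d')"
  shows "switch X (sgn (signed_rook p (q1 + q2))) (a, b) (c, d) =
    switch X (sgn (signed_rook p (q1 + q2))) (a', b') (c', d')"
proof -
  have "((a, b), (c, d)) \<in> arcs (signed_rook p q1)" "((a', b'), (c', d')) \<in> arcs (signed_rook p q1)"
    using assms(1-6) by (simp_all add: arcs_signed_rook)
  then have "switch X1 (sgn (signed_rook p q1)) (a, b) (c, d) =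
      switch X1 (sgn (signed_rook p q1)) (a', b') (c', d')"
    by (rule sign_colouringD(2)[OF f1]) (use assms in \<open>simp_all add: f_def\<close>)
  then show ?thesis
    using assms(3-6) by (simp add: switch_signed_rook X_def)
qed

lemma join_switch_right:
  assumes "((a, b), (c, d)) \<in> arcs (signed_rook p (q1 + q2))"
    and "((a', b'), (c', d')) \<in> arcs (signed_rook p (q1 + q2))"
    and "\<not> b < q1" "\<not> d < q1" "\<not> b' < q1" "\<not> d' < q1"
    and "f (a, b) = f (a', b')" "f (c, d) = f (c', d')"
  shows "switch X (sgn (signed_rook p (q1 + q2))) (a, b) (c, d) =
    switch X (sgn (signed_rook p (q1 + q2))) (a', b') (c', d')"
proof -
  have "((a, b - q1), (c, d - q1)) \<in> arcs (signed_rook p q2)"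
      "((a', b' - q1), (c', d' - q1)) \<in> arcs (signed_rook p q2)"
    using assms(1-6) by (auto simp: arcs_signed_rook)
  then have "switch X2 (sgn (signed_rook p q2)) (a, b - q1) (c, d - q1) =
      switch X2 (sgn (signed_rook p q2)) (a', b' - q1) (c', d' - q1)"
    by (rule sign_colouringD(2)[OF f2]) (use assms in \<open>simp_all add: f_def\<close>)
  then show ?thesis
    using assms(3-6) by (simp add: switch_signed_rook X_def)
qed

lemma join_switch_cross:
  assumes "a < p" "a' < p" "b < q1" "b' < q1" "\<not> d < q1" "\<not> d' < q1" "d < q1 + q2" "d' < q1 + q2"
    and "f (a, b) = f (a', b')" "f (a, d) = f (a', d')"
  shows "switch X (sgn (signed_rook p (q1 + q2))) (a, b) (a, d) =
    switch X (sgn (signed_rook p (q1 + q2))) (a', b') (a', d')"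
proof -
  have "(((a, b) \<in> X1) = ((a, d - q1) \<in> X2)) = (((a', b') \<in> X1) = ((a', d' - q1) \<in> X2))"
    by (rule signed_rook_cross_edges[OF f1 f2]) (use assms in \<open>auto simp: f_def\<close>)
  then show ?thesis
    using assms by (simp add: switch_signed_rook X_def)
qed

lemma join_consistent:
  assumes uv: "(u, v) \<in> arcs (signed_rook p (q1 + q2))"
    and uv': "(u', v') \<in> arcs (signed_rook p (q1 + q2))"
    and eq: "f u = f u'" "f v = f v'"
  shows "switch X (sgn (signed_rook p (q1 + q2))) u v = switch X (sgn (signed_rook p (q1 + q2))) u' v'"
proof -
  obtain a b c d a' b' c' d' where pts: "u = (a, b)" "v = (c, d)" "u' = (a', b')" "v' = (c', d')"
    by (metis surj_pair)
  have bounds: "a < p" "c < p" "a' < p" "c' < p" "b < q1 + q2" "d < q1 + q2" "b' < q1 + q2" "d' < q1 + q2"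
    using uv uv' pts by (auto simp: arcs_signed_rook)
  have sides: "b < q1 \<longleftrightarrow> b' < q1" "d < q1 \<longleftrightarrow> d' < q1"
    using join_side[of a b] join_side[of a' b'] join_side[of c d] join_side[of c' d'] eq pts bounds
    by auto
  consider "b < q1" "d < q1" | "\<not> b < q1" "\<not> d < q1" | "b < q1" "\<not> d < q1" | "\<not> b < q1" "d < q1"
    by blast
  then show ?thesis
  proof cases
    case 1
    show ?thesis
      unfolding pts by (rule join_switch_left) (use uv uv' eq sides 1 in \<open>simp_all add: pts\<close>)
  next
    case 2
    show ?thesis
      unfolding pts by (rule join_switch_right) (use uv uv' eq sides 2 in \<open>simp_all add: pts\<close>)
  next
    case 3
    then have "c = a" "c' = a'"
      using uv uv' pts sides by (auto simp: arcs_signed_rook)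
    show ?thesis
      unfolding pts \<open>c = a\<close> \<open>c' = a'\<close>
      by (rule join_switch_cross;
          use 3 bounds sides eq \<open>c = a\<close> \<open>c' = a'\<close> in \<open>simp_all add: pts\<close>)
  next
    case 4
    then have "a = c" "a' = c'"
      using uv uv' pts sides by (auto simp: arcs_signed_rook)
    have "switch X (sgn (signed_rook p (q1 + q2))) (c, d) (c, b) =
        switch X (sgn (signed_rook p (q1 + q2))) (c', d') (c', b')"
      by (rule join_switch_cross;
          use 4 bounds sides eq \<open>a = c\<close> \<open>a' = c'\<close> in \<open>simp_all add: pts\<close>)
    then show ?thesis
      unfolding pts \<open>a = c\<close> \<open>a' = c'\<close> by (metis switch_signed_rook_commute)
  qed
qed

lemma sign_colouring_join: "sign_colouring (signed_rook p (q1 + q2)) X f"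
  unfolding sign_colouring_def using join_proper join_consistent by blast

end

lemma rook_colourable_append:
  assumes "rook_colourable p q1 N1" and "rook_colourable p q2 N2"
  shows "rook_colourable p (q1 + q2) (N1 + N2)"
proof -
  obtain X1 f1 where f1: "sign_colouring (signed_rook p q1) X1 f1"
    and range1: "f1 ` verts (signed_rook p q1) \<subseteq> {0..<N1}"
    using assms(1) unfolding rook_colourable_def by blast
  obtain X2 f2 where f2: "sign_colouring (signed_rook p q2) X2 f2"
    and range2: "f2 ` verts (signed_rook p q2) \<subseteq> {0..<N2}"
    using assms(2) unfolding rook_colourable_def by blast
  define f where "f = (\<lambda>(i, j). if j < q1 then f1 (i, j) else N1 + f2 (i, j - q1))"
  have "f (i, j) < N1 + N2" if "i < p" "j < q1 + q2" for i j
  proof (cases "j < q1")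
    case True
    have "f1 (i, j) < N1"
      using range1 that True by (auto simp: verts_signed_rook image_subset_iff)
    with True show ?thesis
      by (simp add: f_def)
  next
    case False
    have "f2 (i, j - q1) < N2"
      using range2 that False by (auto simp: verts_signed_rook image_subset_iff)
    with False show ?thesis
      by (simp add: f_def)
  qed
  then have "f ` verts (signed_rook p (q1 + q2)) \<subseteq> {0..<N1 + N2}"
    by (auto simp: verts_signed_rook)
  with sign_colouring_join[OF f1 f2 range1 f_def refl] show ?thesis
    unfolding rook_colourable_def by blast
qed

lemma rook_colourable_even_columns:
  assumes "2 \<le> p"
  shows "rook_colourable p (2 * k) (p * k)"
proof (induction k)
  case 0
  then show ?case
    using rook_colourable_no_columns by simp
next
  case (Suc k)
  from rook_colourable_append[OF this rook_colourable_two_columns[OF assms]] show ?case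
    by (simp add: add.commute)
qed

lemma rook_colourable_half:
  assumes "2 \<le> p" and "2 \<le> q"
  shows "rook_colourable p q ((p * q + 1) div 2)"
proof -
  consider (even_q) "even q" | (even_p) "even p" | (odd) "odd p" "odd q"
    by blast
  then show ?thesis
  proof cases
    case even_q
    then obtain k where "q = 2 * k" ..
    then show ?thesis
      using rook_colourable_even_columns[OF assms(1), of k] by (simp add: mult.left_commute)
  next
    case even_p
    then obtain k where "p = 2 * k" ..
    then show ?thesis
      using rook_colourable_transpose[OF rook_colourable_even_columns[OF assms(2), of k]]
      by (simp add: mult.left_commute mult.commute)
  next
    case odd
    have "\<exists>k. p = 2 * k + 3" "\<exists>l. q = 2 * l + 3"
      using odd assms by presburger+
    then obtain k l where p: "p = 2 * k + 3" and q: "q = 2 * l + 3"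
      by blast
    have "rook_colourable 3 (3 + 2 * l) (5 + 3 * l)"
      using rook_colourable_append[OF rook_colourable_3_3 rook_colourable_even_columns, of l] by simp
    then have "rook_colourable q 3 (5 + 3 * l)"
      using q rook_colourable_transpose by (simp add: add.commute)
    then have "rook_colourable q (3 + 2 * k) (5 + 3 * l + q * k)"
      using rook_colourable_append rook_colourable_even_columns[OF assms(2), of k] by blast
    moreover have "5 + 3 * l + q * k = (p * q + 1) div 2"
      using p q by (simp add: algebra_simps)
    ultimately show ?thesis
      using p rook_colourable_transpose by (simp add: add.commute)
  qed
qed

lemma ceiling_half_of_nat: "\<lceil>real n / 2\<rceil> = int ((n + 1) div 2)"
proof -
  have "\<lceil>real n / 2\<rceil> = - (- int n div 2)"
    using ceiling_divide_eq_div[of "int n" 2] by simp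
  also have "\<dots> = int ((n + 1) div 2)"
    by presburger
  finally show ?thesis .
qed

theorem theorem5p5:
  fixes p q :: nat
  assumes "p \<ge> 2" and "q \<ge> 2"
  shows "int (chi_s (cprod (Kcomp p 1) (Kcomp q (-1)))) = \<lceil>real (p * q) / 2\<rceil>"
proof -
  obtain X f where f: "sign_colouring (signed_rook p q) X f"
    and range: "f ` verts (signed_rook p q) \<subseteq> {0..<(p * q + 1) div 2}"
    using rook_colourable_half[OF assms] unfolding rook_colourable_def by blast
  have "chi_s (signed_rook p q) = (p * q + 1) div 2"
  proof (rule chi_s_eqI[OF signed_graph_signed_rook f])
    show "card (f ` verts (signed_rook p q)) \<le> (p * q + 1) div 2"
      using card_mono[OF _ range] by simp
    show "(p * q + 1) div 2 \<le> card (g ` verts (signed_rook p q))"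
      if "sign_colouring (signed_rook p q) Y g" for Y and g :: "nat \<times> nat \<Rightarrow> nat"
      using signed_rook_card_colours[OF that] by simp
  qed
  then show ?thesis
    unfolding ceiling_half_of_nat by simp
qed

end
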